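(* Let $X$ be a Banach space with a Schauder basis, $k\in\mathbb{N}$, $(x_s)_{s\in[\mathbb{N}]^k}$ a $k$-sequence in $X$ and $(\varepsilon_n)_n$ a null sequence of positive reals. Assume that for some infinite $M\subseteq\mathbb{N}$, $(x_s)_{s\in[M]^k}$ is subordinated with respect to the weak topology of $X$, and let $x_0$ be its weak limit (i.e. $x_0=\widehat\varphi(\emptyset)$ for the witnessing map $\widehat\varphi$). Then there exist an infinite $L\subseteq M$ and a family $(\widetilde x_s)_{s\in[L]^k}$ in $X$ such that: (i) $(\widetilde x_s)_{s\in[L]^k}$ admits a canonical tree decomposition $(y_t)_{t\in[L]^{\le k}}$ with $y_\emptyset=x_0$; (ii) for every $s\in[L]^k$, $\|x_s-\widetilde x_s\|<\varepsilon_n$, where $n$ is such that $\min s=L(n)$; (iii) $(\widetilde x_s)_{s\in[L]^k}$ is subordinated with respect to the weak topology of $X$, with weak limit $x_0$.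
   Context: $[M]^k$ (resp. $[M]^{\le k}$) is the set of subsets of $M$ of size $k$ (resp. at most $k$), each identified with its increasing enumeration; $L(n)$ is the $n$-th element of $L$; for $s\in[\mathbb{N}]^k$ and $j\le k$, $s|j=\{s(1),\dots,s(j)\}$ ($s|0=\emptyset$). $[M]^{\le k}$ carries the topology induced by identifying subsets of $\mathbb{N}$ with points of $\{0,1\}^{\mathbb{N}}$ (a compact metric space). A $k$-sequence $(x_s)_{s\in[M]^k}$ is subordinated (w.r.t. the weak topology) if there is a continuous $\widehat\varphi:[M]^{\le k}\to(X,w)$ with $\widehat\varphi(s)=x_s$ for all $s\in[M]^k$; then $(x_s)_{s\in[M]^k}$ converges weakly to $\widehat\varphi(\emptyset)$, meaning that for every weak neighbourhood $U$ of $\widehat\varphi(\emptyset)$ there is $m$ with $x_s\in U$ whenever $s\in[M]^k$, $s(1)\ge M(m)$. A pair $(s_1,s_2)$ in $[L]^k$ is a plegma pair if $s_1(i)<s_2(i)$ for all $i\le k$ and $s_2(i)<s_1(i+1)$ for all $i<k$. Supports are with respect to the Schauder basis; for sets $A<B$ means $\max A<\min B$. A family $(y_t)_{t\in[L]^{\le k}}$ is a canonical tree decomposition of $(x_s)_{s\in[L]^k}$ if: (i) $x_s=\sum_{j=0}^k y_{s|j}$ for every $s\in[L]^k$; (ii) $\mathrm{supp}(y_t)$ is finite for $t\ne\emptyset$; (iii) $\mathrm{supp}(y_{s|j_1})<\mathrm{supp}(y_{s|j_2})$ for all $s\in[L]^k$ and $1\le j_1<j_2\le k$; (iv) $\mathrm{supp}(y_{s_1|j_1})<\mathrm{supp}(y_{s_2|j_2})$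 for every plegma pair $(s_1,s_2)$ in $[L]^k$ and $1\le j_1\le j_2\le k$; (v) $\mathrm{supp}(y_{s_2|j_1})<\mathrm{supp}(y_{s_1|j_2})$ for every plegma pair $(s_1,s_2)$ in $[L]^k$ and $1\le j_1<j_2\le k$. *)

theory Defs
  imports "HOL-Analysis.Analysis" "HOL-Library.Ramsey" "HOL-Library.Infinite_Set"
begin

definition schauder_basis :: "(nat \<Rightarrow> 'a::banach) \<Rightarrow> bool" where
  "schauder_basis e \<longleftrightarrow> (\<forall>x. \<exists>!c. (\<lambda>n. c n *\<^sub>R e n) sums x)"

definition basis_coeffs :: "(nat \<Rightarrow> 'a::banach) \<Rightarrow> 'a \<Rightarrow> nat \<Rightarrow> real" where
  "basis_coeffs e x = (THE c. (\<lambda>n. c n *\<^sub>R e n) sums x)"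

definition supp :: "(nat \<Rightarrow> 'a::banach) \<Rightarrow> 'a \<Rightarrow> nat set" where
  "supp e x = {n. basis_coeffs e x n \<noteq> 0}"

text \<open>A < B means max A < min B (vacuous if one of them is empty).\<close>
definition set_less :: "nat set \<Rightarrow> nat set \<Rightarrow> bool" where
  "set_less A B \<longleftrightarrow> (\<forall>a\<in>A. \<forall>b\<in>B. a < b)"

definition weak_topology :: "'a::real_normed_vector topology" where
  "weak_topology = topology_generated_by
     {f -` U | f U. bounded_linear (f :: 'a \<Rightarrow> real) \<and> open U}"

text \<open>Subsets of nat identified with points of the Cantor space {0,1}^N (product topology).\<close>
definition cantor_topology :: "nat set topology" where
  "cantor_topology = topology_generated_by
     ({{A. n \<in> A} | n. True} \<union> {{A. n \<notin> A} | n. True})"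

definition nsets_le :: "nat set \<Rightarrow> nat \<Rightarrow> nat set set" where
  "nsets_le M k = {N. N \<subseteq> M \<and> finite N \<and> card N \<le> k}"

definition restr :: "nat set \<Rightarrow> nat \<Rightarrow> nat set" where
  "restr s j = set (take j (sorted_list_of_set s))"

text \<open>plegma pair of k-element sets (elements indexed from 0 here)\<close>
definition plegma :: "nat \<Rightarrow> nat set \<Rightarrow> nat set \<Rightarrow> bool" where
  "plegma k s1 s2 \<longleftrightarrow>
     (let l1 = sorted_list_of_set s1; l2 = sorted_list_of_set s2 in
       (\<forall>i<k. l1 ! i < l2 ! i) \<and> (\<forall>i. Suc i < k \<longrightarrow> l2 ! i < l1 ! Suc i))"

definition subordinated :: "nat set \<Rightarrow> nat \<Rightarrow> (nat set \<Rightarrow> 'a::real_normed_vector)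
    \<Rightarrow> (nat set \<Rightarrow> 'a) \<Rightarrow> bool" where
  "subordinated M k x \<phi> \<longleftrightarrow>
     continuous_map (subtopology cantor_topology (nsets_le M k)) weak_topology \<phi> \<and>
     (\<forall>s\<in>[M]\<^bsup>k\<^esup>. \<phi> s = x s)"

definition canonical_tree_decomposition ::
  "(nat \<Rightarrow> 'a::banach) \<Rightarrow> nat set \<Rightarrow> nat \<Rightarrow> (nat set \<Rightarrow> 'a) \<Rightarrow> (nat set \<Rightarrow> 'a) \<Rightarrow> bool" where
  "canonical_tree_decomposition e L k x y \<longleftrightarrow>
     (\<forall>s\<in>[L]\<^bsup>k\<^esup>. x s = (\<Sum>j\<le>k. y (restr s j))) \<and>
     (\<forall>t\<in>nsets_le L k. t \<noteq> {} \<longrightarrow> finite (supp e (y t))) \<and>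
     (\<forall>s\<in>[L]\<^bsup>k\<^esup>. \<forall>j1 j2. 1 \<le> j1 \<and> j1 < j2 \<and> j2 \<le> k \<longrightarrow>
        set_less (supp e (y (restr s j1))) (supp e (y (restr s j2)))) \<and>
     (\<forall>s1\<in>[L]\<^bsup>k\<^esup>. \<forall>s2\<in>[L]\<^bsup>k\<^esup>. plegma k s1 s2 \<longrightarrow>
        (\<forall>j1 j2. 1 \<le> j1 \<and> j1 \<le> j2 \<and> j2 \<le> k \<longrightarrow>
           set_less (supp e (y (restr s1 j1))) (supp e (y (restr s2 j2))))) \<and>
     (\<forall>s1\<in>[L]\<^bsup>k\<^esup>. \<forall>s2\<in>[L]\<^bsup>k\<^esup>. plegma k s1 s2 \<longrightarrow>
        (\<forall>j1 j2. 1 \<le> j1 \<and> j1 < j2 \<and> j2 \<le> k \<longrightarrow>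
           set_less (supp e (y (restr s2 j1))) (supp e (y (restr s1 j2)))))"

end

theory Submission
  imports Defs
begin

text \<open>
  Write the weak limit map \<open>\<phi>\<close> telescopically along initial segments:
  \<open>\<phi> s = \<phi> {} + \<Sum>\<^sub>j (\<phi> (s|j) - \<phi> (s|j-1))\<close>.  Each increment, seen as a function of the
  new largest element m, tends weakly to 0 as m grows in M (continuity of \<open>\<phi>\<close> in the
  Cantor topology).  Since the coordinate functionals of a Schauder basis are bounded, its
  first p coordinates then tend to 0 in norm, while its coordinates beyond some q are
  uniformly small for the finitely many sets built so far.  Choosing the elements
  \<open>L(0) < L(1) < \<dots>\<close> of L and successive coordinate blocks \<open>[p\<^sub>n, q\<^sub>n)\<close> recursively, the
  increment ending at \<open>L(n)\<close> is replaced by its block projection \<open>y\<close>, which costs less than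
  a tolerance tied to \<open>\<epsilon> n\<close>.  The sums of the \<open>y\<close> along initial segments form the new family.
\<close>

section \<open>The Cantor topology on sets of naturals\<close>

definition cyl :: "nat \<Rightarrow> nat set \<Rightarrow> nat set set" where
  "cyl N t = {A. \<forall>i\<le>N. i \<in> A \<longleftrightarrow> i \<in> t}"

lemma cyl_mono: "N \<le> N' \<Longrightarrow> cyl N' t \<subseteq> cyl N t"
  unfolding cyl_def by auto

lemma cantor_topspace [simp]: "topspace cantor_topology = UNIV"
  unfolding cantor_topology_def topology_generated_by_topspace by auto

lemma openin_cyl: "openin cantor_topology (cyl N t)"
proof -
  have "cyl N t = \<Inter> ((\<lambda>i. if i \<in> t then {A. i \<in> A} else {A. i \<notin> A}) ` {..N})"
    by (auto simp: cyl_def split: if_splits)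
  then show ?thesis
    unfolding cantor_topology_def openin_topology_generated_by_iff
    by (simp only:) (rule generate_topology_on_Inter, auto intro: generate_topology_on.Basis)
qed

lemma openin_cantor_contains_cyl:
  assumes "openin cantor_topology U" and "t \<in> U"
  shows "\<exists>N. cyl N t \<subseteq> U"
proof -
  have "generate_topology_on ({{A. n \<in> A} | n. True} \<union> {{A. n \<notin> A} | n. True}) U"
    using assms(1) unfolding cantor_topology_def openin_topology_generated_by_iff .
  then have "\<forall>t\<in>U. \<exists>N. cyl N t \<subseteq> U"
  proof induction
    case (Int a b)
    show ?case
    proof
      fix t assume "t \<in> a \<inter> b"
      then obtain N1 N2 where "cyl N1 t \<subseteq> a" "cyl N2 t \<subseteq> b" using Int.IH by blast
      then have "cyl (max N1 N2) t \<subseteq> a \<inter> b"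
        using cyl_mono[of N1 "max N1 N2" t] cyl_mono[of N2 "max N1 N2" t] by auto
      then show "\<exists>N. cyl N t \<subseteq> a \<inter> b" by blast
    qed
  next
    case (UN K)
    show ?case
    proof
      fix t assume "t \<in> \<Union>K"
      then obtain k where "k \<in> K" "t \<in> k" by blast
      then obtain N where "cyl N t \<subseteq> k" using UN.IH by blast
      then show "\<exists>N. cyl N t \<subseteq> \<Union>K" using \<open>k \<in> K\<close> by blast
    qed
  next
    case (Basis s)
    then obtain n where "s = {A. n \<in> A} \<or> s = {A. n \<notin> A}" by blast
    then show ?case unfolding cyl_def by auto
  qed simp
  then show ?thesis using assms(2) by blast
qed

lemma cantor_continuous_at_cyl:
  assumes h: "continuous_map (subtopology cantor_topology S) euclideanreal h"
    and "t \<in> S" and "\<epsilon> > 0"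
  shows "\<exists>N. \<forall>s\<in>S. s \<in> cyl N t \<longrightarrow> \<bar>h s - h t\<bar> < \<epsilon>"
proof -
  have "openin (subtopology cantor_topology S) {s \<in> S. h s \<in> ball (h t) \<epsilon>}"
    using openin_continuous_map_preimage[OF h, of "ball (h t) \<epsilon>"] by simp
  then obtain T where T: "openin cantor_topology T" "{s \<in> S. h s \<in> ball (h t) \<epsilon>} = T \<inter> S"
    unfolding openin_subtopology by auto
  have "t \<in> {s \<in> S. h s \<in> ball (h t) \<epsilon>}" using assms(2,3) by simp
  then have "t \<in> T" using T(2) by (simp only: Int_iff)
  then obtain N where N: "cyl N t \<subseteq> T" using openin_cantor_contains_cyl T(1) by blast
  have "\<bar>h s - h t\<bar> < \<epsilon>" if "s \<in> S" "s \<in> cyl N t" for s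
  proof -
    have "s \<in> {s \<in> S. h s \<in> ball (h t) \<epsilon>}" using N that T(2) by (simp only: Int_iff subsetD)
    then show ?thesis by (simp add: dist_real_def abs_minus_commute)
  qed
  then show ?thesis by blast
qed

lemma cantor_continuous_by_cyl:
  assumes H: "\<And>t \<epsilon>. t \<in> S \<Longrightarrow> \<epsilon> > 0 \<Longrightarrow> \<exists>N. \<forall>s\<in>S. s \<in> cyl N t \<longrightarrow> \<bar>h s - h t\<bar> < \<epsilon>"
  shows "continuous_map (subtopology cantor_topology S) euclideanreal h"
  unfolding continuous_map_def
proof (intro conjI allI impI)
  show "h \<in> topspace (subtopology cantor_topology S) \<rightarrow> topspace euclideanreal" by simp
  fix U :: "real set" assume "openin euclideanreal U"
  have "\<exists>T. openin (subtopology cantor_topology S) T \<and> t \<in> T \<and> T \<subseteq> {s \<in> S. h s \<in> U}"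
    if t: "t \<in> S" "h t \<in> U" for t
  proof -
    have "open U" using \<open>openin euclideanreal U\<close> by simp
    then obtain \<epsilon> where "\<epsilon> > 0" and \<epsilon>: "ball (h t) \<epsilon> \<subseteq> U"
      using t(2) open_contains_ball by blast
    then obtain N where N: "\<forall>s\<in>S. s \<in> cyl N t \<longrightarrow> \<bar>h s - h t\<bar> < \<epsilon>" using H t(1) by blast
    have "openin (subtopology cantor_topology S) (cyl N t \<inter> S)"
      unfolding openin_subtopology using openin_cyl by blast
    moreover have "h s \<in> U" if "s \<in> cyl N t \<inter> S" for s
    proof -
      have "\<bar>h s - h t\<bar> < \<epsilon>" using N that by blast
      then show ?thesis using \<epsilon> by (auto simp: dist_real_def abs_minus_commute)
    qed
    moreover have "t \<in> cyl N t \<inter> S" using t(1) by (simp add: cyl_def)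
    ultimately show ?thesis by (intro exI[of _ "cyl N t \<inter> S"]) blast
  qed
  then show "openin (subtopology cantor_topology S) {s \<in> topspace (subtopology cantor_topology S). h s \<in> U}"
    by (subst openin_subopen) auto
qed

section \<open>The weak topology\<close>

lemma weak_topspace [simp]: "topspace (weak_topology :: 'a::real_normed_vector topology) = UNIV"
proof -
  have "(\<lambda>x::'a. 0::real) -` UNIV \<in> {f -` U | f U. bounded_linear (f :: 'a \<Rightarrow> real) \<and> open U}"
    using bounded_linear_zero by blast
  then show ?thesis unfolding weak_topology_def topology_generated_by_topspace by auto
qed

lemma continuous_map_weak_functional:
  assumes "bounded_linear (f :: 'a::real_normed_vector \<Rightarrow> real)"
  shows "continuous_map weak_topology euclideanreal f"
  unfolding continuous_map_def weak_topspace
proof (intro conjI allI impI)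
  show "f \<in> UNIV \<rightarrow> topspace euclideanreal" by simp
  fix U :: "real set" assume "openin euclideanreal U"
  then have "f -` U \<in> {f -` U | f U. bounded_linear (f :: 'a \<Rightarrow> real) \<and> open U}"
    using assms by auto
  then have "openin weak_topology (f -` U)"
    unfolding weak_topology_def by (rule topology_generated_by_Basis)
  then show "openin weak_topology {x \<in> UNIV. f x \<in> U}" by (simp add: vimage_def)
qed

lemma continuous_map_weak_iff:
  "continuous_map X weak_topology g \<longleftrightarrow>
     (\<forall>f. bounded_linear (f :: 'a::real_normed_vector \<Rightarrow> real) \<longrightarrow> continuous_map X euclideanreal (f \<circ> g))"
proof (intro iffI allI impI)
  fix f :: "'a \<Rightarrow> real"
  assume "continuous_map X weak_topology g" and "bounded_linear f"
  then show "continuous_map X euclideanreal (f \<circ> g)"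
    by (rule continuous_map_compose[OF _ continuous_map_weak_functional])
next
  assume H: "\<forall>f. bounded_linear (f :: 'a \<Rightarrow> real) \<longrightarrow> continuous_map X euclideanreal (f \<circ> g)"
  have "openin X {x \<in> topspace X. g x \<in> U}" if "openin weak_topology U" for U
  proof -
    have "generate_topology_on {f -` U | f U. bounded_linear (f :: 'a \<Rightarrow> real) \<and> open U} U"
      using that unfolding weak_topology_def by (rule openin_topology_generated_by)
    then show ?thesis
    proof induction
      case (Int a b)
      have "{x \<in> topspace X. g x \<in> a \<inter> b} = {x \<in> topspace X. g x \<in> a} \<inter> {x \<in> topspace X. g x \<in> b}"
        by auto
      then show ?case using Int.IH by (simp only: openin_Int)
    next
      case (UN K)
      have "{x \<in> topspace X. g x \<in> \<Union>K} = \<Union>((\<lambda>k. {x \<in> topspace X. g x \<in> k}) ` K)" by auto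
      then show ?case using UN.IH by (simp only:) (rule openin_Union, blast)
    next
      case (Basis s)
      then have "\<exists>f V. s = f -` V \<and> bounded_linear (f :: 'a \<Rightarrow> real) \<and> open V" by simp
      then obtain f V where "s = f -` V \<and> bounded_linear (f :: 'a \<Rightarrow> real) \<and> open V" by iprover
      then have s: "s = f -` V" and f: "bounded_linear f" and V: "open V" by auto
      have "openin X {x \<in> topspace X. (f \<circ> g) x \<in> V}"
        using H[rule_format, OF f] by (rule openin_continuous_map_preimage) (simp add: V)
      then show ?case using s by simp
    qed simp
  qed
  then show "continuous_map X weak_topology g" by (simp add: continuous_map_def)
qed

section \<open>Initial segments of finite sets of naturals\<close>

abbreviation sl :: "nat set \<Rightarrow> nat list" where "sl s \<equiv> sorted_list_of_set s"

lemma restr_subset: "finite s \<Longrightarrow> restr s j \<subseteq> s"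
  unfolding restr_def using set_take_subset[of j "sl s"] by simp

lemma restr_0 [simp]: "restr s 0 = {}" by (simp add: restr_def)

lemma restr_full: "finite s \<Longrightarrow> card s \<le> j \<Longrightarrow> restr s j = s"
  unfolding restr_def by simp

lemma finite_restr [simp]: "finite (restr s j)" by (simp add: restr_def)

lemma card_restr: "finite s \<Longrightarrow> card (restr s j) = min j (card s)"
  unfolding restr_def by (simp add: distinct_card)

lemma restr_in_nsets_le: "s \<in> nsets_le L k \<Longrightarrow> restr s j \<in> nsets_le L k"
  unfolding nsets_le_def using restr_subset card_restr by fastforce

lemma restr_Suc: "finite s \<Longrightarrow> j < card s \<Longrightarrow> restr s (Suc j) = insert (sl s ! j) (restr s j)"
  unfolding restr_def by (simp add: take_Suc_conv_app_nth)

lemma sl_less: "finite s \<Longrightarrow> i < j \<Longrightarrow> j < card s \<Longrightarrow> sl s ! i < sl s ! j"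
  using sorted_wrt_nth_less[OF strict_sorted_list_of_set[of s]] by simp

lemma sl_le: "finite s \<Longrightarrow> i \<le> j \<Longrightarrow> j < card s \<Longrightarrow> sl s ! i \<le> sl s ! j"
  using sl_less[of s i j] by (cases "i = j") auto

lemma restr_less:
  assumes "finite s" and "j < card s" and "a \<in> restr s j"
  shows "a < sl s ! j"
proof -
  obtain i where "i < j" "a = sl s ! i"
    using assms(2,3) unfolding restr_def by (auto simp: in_set_conv_nth)
  then show ?thesis using sl_less[OF assms(1) _ assms(2)] by simp
qed

lemma Max_restr_Suc:
  assumes "finite s" and "j < card s"
  shows "Max (restr s (Suc j)) = sl s ! j"
  unfolding restr_Suc[OF assms]
  by (rule Max_eqI) (use restr_less[OF assms] in \<open>auto intro: less_imp_le\<close>)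

lemma restr_Suc_nonempty: "finite s \<Longrightarrow> j < card s \<Longrightarrow> restr s (Suc j) \<noteq> {}"
  using restr_Suc by auto

lemma restr_Suc_minus_Max:
  assumes "finite s" and "j < card s"
  shows "restr s (Suc j) - {Max (restr s (Suc j))} = restr s j"
proof -
  have "sl s ! j \<notin> restr s j" using restr_less[OF assms] by blast
  then show ?thesis using Max_restr_Suc[OF assms] restr_Suc[OF assms] by simp
qed

lemma sl_split:
  assumes "finite s"
  shows "sl s = sl {a\<in>s. a \<le> N} @ sl {a\<in>s. N < a}"
proof -
  let ?t = "{a\<in>s. a \<le> N}" and ?r = "{a\<in>s. N < a}"
  have set_sl: "set (sl ?t) = ?t" "set (sl ?r) = ?r" using assms by simp_all
  have "\<forall>x\<in>set (sl ?t). \<forall>y\<in>set (sl ?r). x < y" unfolding set_sl by auto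
  then have "sorted_wrt (<) (sl ?t @ sl ?r)"
    unfolding sorted_wrt_append using strict_sorted_list_of_set by blast
  moreover have "set (sl ?t @ sl ?r) = set (sl s)" unfolding set_append set_sl using assms by auto
  ultimately show ?thesis using strict_sorted_equal strict_sorted_list_of_set by metis
qed

lemma restr_cut:
  assumes "finite s" and "j \<le> card {a\<in>s. a \<le> N}"
  shows "restr s j = restr {a\<in>s. a \<le> N} j"
proof -
  have "length (sl {a\<in>s. a \<le> N}) = card {a\<in>s. a \<le> N}" by simp
  then have "take j (sl s) = take j (sl {a\<in>s. a \<le> N})"
    unfolding sl_split[OF assms(1), of N] take_append using assms(2) by simp
  then show ?thesis unfolding restr_def by simp
qed

lemma sl_above_cut:
  assumes "finite s" and "card {a\<in>s. a \<le> N} \<le> j" and "j < card s"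
  shows "N < sl s ! j"
proof -
  let ?t = "{a\<in>s. a \<le> N}" and ?r = "{a\<in>s. N < a}"
  have "s = ?t \<union> ?r" and "?t \<inter> ?r = {}" by auto
  then have "card s = card ?t + card ?r" using assms(1) card_Un_disjoint[of ?t ?r] by simp
  then have "j - card ?t < length (sl ?r)" using assms(2,3) by simp
  then have "sl ?r ! (j - card ?t) \<in> ?r" using nth_mem[of "j - card ?t" "sl ?r"] assms(1) by simp
  moreover have "sl s ! j = sl ?r ! (j - card ?t)"
    unfolding sl_split[OF assms(1), of N] nth_append using assms(2) by simp
  ultimately show ?thesis by simp
qed

lemma enumerate_range:
  assumes sm: "strict_mono (f :: nat \<Rightarrow> nat)"
  shows "enumerate (range f) n = f n"
proof (induction n rule: less_induct)
  case (less n)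
  let ?g = "enumerate (range f)"
  have inf: "infinite (range f)" using strict_mono_imp_inj_on[OF sm] range_inj_infinite by blast
  have gsm: "strict_mono ?g" using enumerate_mono[OF _ inf] by (auto simp: strict_mono_def)
  have rg: "range ?g = range f" using bij_enumerate[OF inf] by (simp add: bij_betw_def)
  obtain m where m: "f n = ?g m" using rg by (metis rangeI imageE)
  have "\<not> m < n"
  proof
    assume "m < n"
    then have "?g m = f m" using less by simp
    then show False using m \<open>m < n\<close> strict_monoD[OF sm, of m n] by simp
  qed
  then have "?g n \<le> f n" using m strict_mono_leD[OF gsm, of n m] by simp
  obtain m' where m': "?g n = f m'" using rg by (metis rangeI imageE)
  have "\<not> m' < n"
  proof
    assume "m' < n"
    then have "?g m' = f m'" using less by simp
    then show False using m' \<open>m' < n\<close> strict_monoD[OF gsm, of m' n] by simp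
  qed
  then have "f n \<le> ?g n" using m' strict_mono_leD[OF sm, of n m'] by simp
  with \<open>?g n \<le> f n\<close> show ?case by simp
qed

section \<open>The coordinate functionals of a Schauder basis are bounded\<close>

locale schauder =
  fixes e :: "nat \<Rightarrow> 'a::banach"
  assumes basis: "schauder_basis e"
begin

abbreviation coef :: "'a \<Rightarrow> nat \<Rightarrow> real" where "coef \<equiv> basis_coeffs e"

lemma coef_sums: "(\<lambda>n. coef x n *\<^sub>R e n) sums x"
proof -
  have "\<exists>!c. (\<lambda>n. c n *\<^sub>R e n) sums x" using basis unfolding schauder_basis_def by blast
  then show ?thesis unfolding basis_coeffs_def by (rule theI')
qed

lemma coef_unique: "(\<lambda>n. c n *\<^sub>R e n) sums x \<Longrightarrow> coef x = c"
  using basis coef_sums unfolding schauder_basis_def by blast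

text \<open>Uniqueness of expansions forces the basis vectors to be nonzero.\<close>
lemma basis_nonzero: "e n \<noteq> 0"
proof
  assume "e n = 0"
  then have "(\<lambda>i. (if i = n then 1 else 0::real) *\<^sub>R e i) = (\<lambda>i. 0)"
    by (auto simp: fun_eq_iff)
  then have "(\<lambda>i. (if i = n then 1 else 0::real) *\<^sub>R e i) sums 0" by simp
  then have "coef 0 = (\<lambda>i. if i = n then 1 else 0)" by (rule coef_unique)
  moreover have "coef 0 = (\<lambda>i. 0)" by (rule coef_unique) simp
  ultimately show False by (metis zero_neq_one)
qed

lemma coef_add: "coef (x + y) n = coef x n + coef y n"
proof -
  have "(\<lambda>n. (coef x n + coef y n) *\<^sub>R e n) sums (x + y)"
    using sums_add[OF coef_sums[of x] coef_sums[of y]] by (simp add: scaleR_add_left)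
  then show ?thesis using coef_unique by metis
qed

lemma coef_scale: "coef (a *\<^sub>R x) n = a * coef x n"
proof -
  have "(\<lambda>n. (a * coef x n) *\<^sub>R e n) sums (a *\<^sub>R x)"
    using sums_scaleR_right[OF coef_sums[of x], of a] by simp
  then show ?thesis using coef_unique by metis
qed

lemma coef_diff: "coef (x - y) n = coef x n - coef y n"
  using coef_add[of x "-y" n] coef_scale[of "-1" y n] by simp

lemma coef_finite_sum:
  assumes "finite F"
  shows "coef (\<Sum>i\<in>F. a i *\<^sub>R e i) = (\<lambda>n. if n \<in> F then a n else 0)"
proof (rule coef_unique)
  have "(\<lambda>n. (if n \<in> F then a n else 0) *\<^sub>R e n) sums
      (\<Sum>n\<in>F. (if n \<in> F then a n else 0) *\<^sub>R e n)"
    by (rule sums_finite[OF assms]) auto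
  then show "(\<lambda>n. (if n \<in> F then a n else 0) *\<^sub>R e n) sums (\<Sum>i\<in>F. a i *\<^sub>R e i)"
    by simp
qed

definition proj :: "nat \<Rightarrow> 'a \<Rightarrow> 'a" where "proj n x = (\<Sum>i<n. coef x i *\<^sub>R e i)"

lemma proj_tendsto: "(\<lambda>n. proj n x) \<longlonglongrightarrow> x"
  using coef_sums[of x] unfolding sums_def proj_def by simp

lemma proj_add: "proj n (x + y) = proj n x + proj n y"
  by (simp add: proj_def coef_add scaleR_add_left sum.distrib)

lemma proj_diff: "proj n (x - y) = proj n x - proj n y"
  by (simp add: proj_def coef_diff scaleR_diff_left sum_subtractf)

lemma proj_scale: "proj n (a *\<^sub>R x) = a *\<^sub>R proj n x"
  by (simp add: proj_def coef_scale scaleR_sum_right)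

lemma proj_Suc_diff: "proj (Suc i) x - proj i x = coef x i *\<^sub>R e i"
  by (simp add: proj_def)

text \<open>It dominates the
  original norm and each coordinate; the point of this section is that it is also dominated
  by a multiple of the original norm (\<open>bnorm_bounded\<close>).\<close>
definition bnorm :: "'a \<Rightarrow> real" where "bnorm x = (SUP n. norm (proj n x))"

lemma proj_bdd: "bdd_above (range (\<lambda>n. norm (proj n x)))"
proof -
  have "Bseq (\<lambda>n. proj n x)" using proj_tendsto convergent_imp_Bseq convergentI by blast
  then obtain K where "\<And>n. norm (proj n x) \<le> K" unfolding Bseq_def by blast
  then show ?thesis by (intro bdd_aboveI[where M=K]) auto
qed

lemma norm_proj_le_bnorm: "norm (proj n x) \<le> bnorm x"
  unfolding bnorm_def by (rule cSUP_upper[OF _ proj_bdd]) auto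

lemma bnorm_le: "(\<And>n. norm (proj n x) \<le> B) \<Longrightarrow> bnorm x \<le> B"
  unfolding bnorm_def by (rule cSUP_least) auto

lemma norm_le_bnorm: "norm x \<le> bnorm x"
proof -
  have "(\<lambda>n. norm (proj n x)) \<longlonglongrightarrow> norm x" using proj_tendsto tendsto_norm by blast
  then show ?thesis by (rule LIMSEQ_le_const2) (auto intro: norm_proj_le_bnorm)
qed

lemma bnorm_triangle: "bnorm (x + y) \<le> bnorm x + bnorm y"
proof (rule bnorm_le)
  fix n
  have "norm (proj n (x + y)) \<le> norm (proj n x) + norm (proj n y)"
    by (simp add: proj_add norm_triangle_ineq)
  then show "norm (proj n (x + y)) \<le> bnorm x + bnorm y"
    using norm_proj_le_bnorm[of n x] norm_proj_le_bnorm[of n y] by linarith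
qed

lemma bnorm_scale: "bnorm (a *\<^sub>R x) \<le> \<bar>a\<bar> * bnorm x"
  by (rule bnorm_le) (simp add: proj_scale mult_left_mono norm_proj_le_bnorm)

lemma bnorm_minus: "bnorm (- x) = bnorm x"
  using bnorm_scale[of "-1" x] bnorm_scale[of "-1" "-x"] by simp

lemma bnorm_diff: "bnorm (x - y) \<le> bnorm x + bnorm y"
  using bnorm_triangle[of x "-y"] bnorm_minus[of y] by simp

lemma bnorm_zero: "bnorm 0 = 0"
  using bnorm_scale[of 0 0] norm_le_bnorm[of 0] by simp

lemma bnorm_sum: "bnorm (\<Sum>i\<in>F. g i) \<le> (\<Sum>i\<in>F. bnorm (g i))"
proof (induction F rule: infinite_finite_induct)
  case (insert x F)
  then show ?case using bnorm_triangle[of "g x" "sum g F"] by simp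
qed (simp_all add: bnorm_zero)

text \<open>A coordinate is the difference of two consecutive projections.\<close>
lemma coef_le_bnorm: "\<bar>coef x i\<bar> * norm (e i) \<le> 2 * bnorm x"
proof -
  have "\<bar>coef x i\<bar> * norm (e i) = norm (proj (Suc i) x - proj i x)" by (simp add: proj_Suc_diff)
  also have "\<dots> \<le> norm (proj (Suc i) x) + norm (proj i x)" by (rule norm_triangle_ineq4)
  also have "\<dots> \<le> 2 * bnorm x" using norm_proj_le_bnorm[of "Suc i" x] norm_proj_le_bnorm[of i x] by simp
  finally show ?thesis .
qed

lemma bnorm_Cauchy_coef:
  fixes X :: "nat \<Rightarrow> 'a"
  assumes C: "\<And>\<epsilon>. \<epsilon> > 0 \<Longrightarrow> \<exists>J. \<forall>j\<ge>J. \<forall>l\<ge>J. bnorm (X j - X l) < \<epsilon>"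
  shows "Cauchy (\<lambda>j. coef (X j) i)"
proof (rule metric_CauchyI)
  fix \<epsilon> :: real assume "\<epsilon> > 0"
  have ne: "norm (e i) > 0" using basis_nonzero by simp
  obtain J where J: "\<forall>j\<ge>J. \<forall>l\<ge>J. bnorm (X j - X l) < \<epsilon> * norm (e i) / 2"
    using C[of "\<epsilon> * norm (e i) / 2"] \<open>\<epsilon> > 0\<close> ne by auto
  show "\<exists>M. \<forall>m\<ge>M. \<forall>n\<ge>M. dist (coef (X m) i) (coef (X n) i) < \<epsilon>"
  proof (intro exI allI impI)
    fix m n assume "J \<le> m" "J \<le> n"
    have "\<bar>coef (X m - X n) i\<bar> * norm (e i) \<le> 2 * bnorm (X m - X n)" by (rule coef_le_bnorm)
    also have "\<dots> < \<epsilon> * norm (e i)" using J \<open>J \<le> m\<close> \<open>J \<le> n\<close> by force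
    finally have "\<bar>coef (X m - X n) i\<bar> < \<epsilon>" using ne by simp
    then show "dist (coef (X m) i) (coef (X n) i) < \<epsilon>" by (simp add: dist_real_def coef_diff)
  qed
qed

lemma uniform_limit_of_projections:
  fixes X :: "nat \<Rightarrow> 'a"
  assumes uniform: "\<And>\<epsilon>. \<epsilon> > 0 \<Longrightarrow> \<exists>J. \<forall>j\<ge>J. \<forall>n. norm (proj n (X j) - (\<Sum>i<n. a i *\<^sub>R e i)) \<le> \<epsilon>"
  shows "\<exists>x. \<forall>\<epsilon>>0. \<exists>J. \<forall>j\<ge>J. bnorm (X j - x) \<le> \<epsilon>"
proof -
  define S where "S n = (\<Sum>i<n. a i *\<^sub>R e i)" for n
  have "Cauchy S"
  proof (rule metric_CauchyI)
    fix \<epsilon> :: real assume "\<epsilon> > 0"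
    obtain J where J: "\<forall>n. norm (proj n (X J) - S n) \<le> \<epsilon>/4"
      using uniform[of "\<epsilon>/4"] \<open>\<epsilon> > 0\<close> unfolding S_def by auto
    have "Cauchy (\<lambda>n. proj n (X J))" using proj_tendsto convergent_Cauchy convergentI by blast
    then obtain N where N: "\<forall>m\<ge>N. \<forall>n\<ge>N. dist (proj m (X J)) (proj n (X J)) < \<epsilon>/4"
      using metric_CauchyD[of "\<lambda>n. proj n (X J)" "\<epsilon>/4"] \<open>\<epsilon> > 0\<close> by auto
    have "dist (S m) (S n) < \<epsilon>" if "N \<le> m" "N \<le> n" for m n
    proof -
      have "dist (S m) (S n) \<le> dist (S m) (proj m (X J)) + dist (proj m (X J)) (proj n (X J))
          + dist (proj n (X J)) (S n)"
        using dist_triangle[of "S m" "S n" "proj m (X J)"]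
          dist_triangle[of "proj m (X J)" "S n" "proj n (X J)"] by linarith
      moreover have "dist (S m) (proj m (X J)) \<le> \<epsilon>/4" "dist (proj n (X J)) (S n) \<le> \<epsilon>/4"
        using J by (simp_all add: dist_norm norm_minus_commute)
      moreover have "dist (proj m (X J)) (proj n (X J)) < \<epsilon>/4" using N that by blast
      ultimately show ?thesis using \<open>\<epsilon> > 0\<close> by linarith
    qed
    then show "\<exists>M. \<forall>m\<ge>M. \<forall>n\<ge>M. dist (S m) (S n) < \<epsilon>" by blast
  qed
  then obtain x where "S \<longlonglongrightarrow> x" using Cauchy_convergent_iff convergent_def by blast
  then have "coef x = a" by (intro coef_unique) (simp add: sums_def S_def[abs_def])
  then have proj_x: "proj n x = S n" for n by (simp add: proj_def S_def)
  have "\<exists>J. \<forall>j\<ge>J. bnorm (X j - x) \<le> \<epsilon>" if eps: "\<epsilon> > 0" for \<epsilon>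
  proof -
    obtain J where "\<forall>j\<ge>J. \<forall>n. norm (proj n (X j) - S n) \<le> \<epsilon>" using uniform[OF eps] unfolding S_def by blast
    then have "\<forall>j\<ge>J. bnorm (X j - x) \<le> \<epsilon>" by (auto intro: bnorm_le simp: proj_diff proj_x)
    then show ?thesis by blast
  qed
  then show ?thesis by blast
qed

text \<open>The space is complete for the basis norm: the coordinates converge, and the
  projections converge uniformly to the partial sums of the limiting coordinates.\<close>
lemma bnorm_complete:
  fixes X :: "nat \<Rightarrow> 'a"
  assumes C: "\<And>\<epsilon>. \<epsilon> > 0 \<Longrightarrow> \<exists>J. \<forall>j\<ge>J. \<forall>l\<ge>J. bnorm (X j - X l) < \<epsilon>"
  shows "\<exists>x. \<forall>\<epsilon>>0. \<exists>J. \<forall>j\<ge>J. bnorm (X j - x) \<le> \<epsilon>"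
proof -
  have "\<exists>a. (\<lambda>j. coef (X j) i) \<longlonglongrightarrow> a" for i
    using bnorm_Cauchy_coef[OF C] Cauchy_convergent_iff convergent_def by blast
  then obtain a where a: "\<And>i. (\<lambda>j. coef (X j) i) \<longlonglongrightarrow> a i" by metis
  show ?thesis
  proof (rule uniform_limit_of_projections)
    fix \<epsilon> :: real assume "\<epsilon> > 0"
    obtain J where J: "\<forall>j\<ge>J. \<forall>l\<ge>J. bnorm (X j - X l) < \<epsilon>" using C \<open>\<epsilon> > 0\<close> by blast
    have "norm (proj n (X j) - (\<Sum>i<n. a i *\<^sub>R e i)) \<le> \<epsilon>" if "J \<le> j" for j n
    proof (rule LIMSEQ_le_const2)
      show "(\<lambda>l. norm (proj n (X j) - proj n (X l))) \<longlonglongrightarrow> norm (proj n (X j) - (\<Sum>i<n. a i *\<^sub>R e i))"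
        unfolding proj_def by (intro tendsto_intros a)
      have "norm (proj n (X j) - proj n (X l)) \<le> bnorm (X j - X l)" for l
        unfolding proj_diff[symmetric] by (rule norm_proj_le_bnorm)
      then have "\<forall>l\<ge>J. norm (proj n (X j) - proj n (X l)) \<le> \<epsilon>"
        using J \<open>J \<le> j\<close> by (meson le_less_trans less_imp_le)
      then show "\<exists>N. \<forall>l\<ge>N. norm (proj n (X j) - proj n (X l)) \<le> \<epsilon>" by blast
    qed
    then show "\<exists>J. \<forall>j\<ge>J. \<forall>n. norm (proj n (X j) - (\<Sum>i<n. a i *\<^sub>R e i)) \<le> \<epsilon>" by blast
  qed
qed

text \<open>Baire category: some closed basis-norm ball is somewhere dense.\<close>
lemma bnorm_baire: "\<exists>N::nat. \<exists>x0 r. r > 0 \<and> ball x0 r \<subseteq> closure {x. bnorm x \<le> real N}"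
proof -
  let ?F = "range (\<lambda>N::nat. closure {x. bnorm x \<le> real N})"
  have cover: "x \<in> \<Union>?F" for x
  proof -
    have "x \<in> closure {y. bnorm y \<le> real (nat \<lceil>bnorm x\<rceil>)}"
      by (rule closure_subset[THEN subsetD]) (simp add: real_nat_ceiling_ge)
    then show ?thesis by blast
  qed
  have "\<not> (\<forall>T\<in>?F. closedin euclidean T \<and> euclidean interior_of T = {})"
  proof
    assume "\<forall>T\<in>?F. closedin euclidean T \<and> euclidean interior_of T = {}"
    then have "euclidean interior_of \<Union>?F = {}"
      by (intro Baire_category_alt) (auto simp: completely_metrizable_space_euclidean)
    moreover have "\<Union>?F = UNIV" using cover by blast
    ultimately show False by simp
  qed
  then obtain N y where "y \<in> interior (closure {x. bnorm x \<le> real N})" by auto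
  then show ?thesis by (meson mem_interior)
qed

text \<open>Symmetrising a somewhere-dense set: vectors of small norm are approximable by
  vectors of bounded basis norm.\<close>
lemma bnorm_approx_small:
  assumes B: "ball x0 r \<subseteq> closure {x. bnorm x \<le> c}" and h: "norm h < r" and "\<eta> > 0"
  shows "\<exists>g. bnorm g \<le> c \<and> norm (h - g) < \<eta>"
proof -
  let ?C = "{x. bnorm x \<le> c}"
  have "x0 + h \<in> closure ?C" "x0 - h \<in> closure ?C" using B h by (auto simp: dist_norm)
  then obtain g1 g2 where g1: "g1 \<in> ?C" "dist g1 (x0 + h) < \<eta>" and g2: "g2 \<in> ?C" "dist g2 (x0 - h) < \<eta>"
    using \<open>\<eta> > 0\<close> unfolding closure_approachable by blast
  define g where "g = (1/2) *\<^sub>R (g1 - g2)"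
  have "bnorm g \<le> (1/2) * bnorm (g1 - g2)" unfolding g_def using bnorm_scale[of "1/2" "g1 - g2"] by simp
  also have "\<dots> \<le> (1/2) * (bnorm g1 + bnorm g2)" using bnorm_diff[of g1 g2] by simp
  also have "\<dots> \<le> c" using g1 g2 by simp
  finally have "bnorm g \<le> c" .
  moreover have "h - g = (1/2) *\<^sub>R ((x0 + h - g1) - (x0 - h - g2))"
    unfolding g_def by (simp add: algebra_simps) (simp flip: scaleR_add_left)
  then have "norm (h - g) \<le> (1/2) * (norm (x0 + h - g1) + norm (x0 - h - g2))"
    using norm_triangle_ineq4[of "x0 + h - g1" "x0 - h - g2"] by simp
  then have "norm (h - g) < \<eta>" using g1 g2 by (simp add: dist_norm norm_minus_commute)
  ultimately show ?thesis by blast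
qed

text \<open>By homogeneity, every vector is approximable by vectors whose basis norm is
  controlled by a fixed multiple of its norm.\<close>
lemma bnorm_approx: "\<exists>K>0. \<forall>h \<eta>. \<eta> > 0 \<longrightarrow> (\<exists>g. bnorm g \<le> K * norm h \<and> norm (h - g) < \<eta>)"
proof -
  obtain N :: nat and x0 r where r: "r > 0" and B: "ball x0 r \<subseteq> closure {x. bnorm x \<le> real N}"
    using bnorm_baire by blast
  define K where "K = 2 * real N / r + 1"
  have K: "K > 0" unfolding K_def using r by (simp add: add_nonneg_pos)
  have "\<exists>g. bnorm g \<le> K * norm h \<and> norm (h - g) < \<eta>" if "\<eta> > 0" for h \<eta>
  proof (cases "h = 0")
    case True then show ?thesis using \<open>\<eta> > 0\<close> by (intro exI[of _ 0]) (simp add: bnorm_zero)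
  next
    case False
    then have nh: "norm h > 0" by simp
    define c where "c = r / (2 * norm h)"
    have c: "c > 0" unfolding c_def using r nh by simp
    have "norm (c *\<^sub>R h) < r" unfolding c_def using r nh by simp
    then obtain g' where g': "bnorm g' \<le> real N" "norm (c *\<^sub>R h - g') < \<eta> * c"
      using bnorm_approx_small[OF B, of "c *\<^sub>R h" "\<eta> * c"] \<open>\<eta> > 0\<close> c by auto
    define g where "g = (1/c) *\<^sub>R g'"
    have "bnorm g \<le> (1/c) * bnorm g'" unfolding g_def using bnorm_scale[of "1/c" g'] c by simp
    also have "\<dots> \<le> (1/c) * real N" using g' c by (simp add: divide_right_mono)
    also have "\<dots> = 2 * real N / r * norm h" unfolding c_def using r nh by (simp add: field_simps)
    also have "\<dots> \<le> K * norm h" unfolding K_def using nh by (simp add: distrib_right)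
    finally have "bnorm g \<le> K * norm h" .
    moreover have "h - g = (1/c) *\<^sub>R (c *\<^sub>R h - g')" unfolding g_def using c by (simp add: algebra_simps)
    then have "c * norm (h - g) = norm (c *\<^sub>R h - g')" using c by simp
    then have "c * norm (h - g) < c * \<eta>" using g'(2) by (simp add: mult.commute)
    then have "norm (h - g) < \<eta>" using c by simp
    ultimately show ?thesis by blast
  qed
  then show ?thesis using K by blast
qed

lemma sum_half_powers: "l \<le> j \<Longrightarrow> (\<Sum>i\<in>{l..<j}. (1/2::real)^i) = 2 * (1/2)^l - 2 * (1/2)^j"
  by (induction j rule: dec_induct) (simp_all add: sum.atLeastLessThan_Suc)

lemma bnorm_geometric_block:
  assumes g: "\<And>j. bnorm (g j) \<le> c * (1/2)^j" and "l \<le> j"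
  shows "bnorm (\<Sum>i\<in>{l..<j}. g i) \<le> 2 * c * (1/2)^l"
proof -
  have c: "c \<ge> 0" using order_trans[OF norm_ge_zero norm_le_bnorm, of "g 0"] g[of 0] by simp
  have "bnorm (\<Sum>i\<in>{l..<j}. g i) \<le> (\<Sum>i\<in>{l..<j}. bnorm (g i))" by (rule bnorm_sum)
  also have "\<dots> \<le> (\<Sum>i\<in>{l..<j}. c * (1/2)^i)" by (rule sum_mono) (rule g)
  also have "\<dots> = c * (2 * (1/2)^l - 2 * (1/2)^j)"
    by (simp add: sum_distrib_left[symmetric] sum_half_powers[OF \<open>l \<le> j\<close>])
  also have "\<dots> \<le> 2 * c * (1/2)^l" using c by (simp add: right_diff_distrib)
  finally show ?thesis .
qed

lemma bnorm_convergence_imp_tendsto: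
  assumes "\<forall>\<epsilon>>0. \<exists>J. \<forall>j\<ge>J. bnorm (G j - x) \<le> \<epsilon>"
  shows "G \<longlonglongrightarrow> x"
proof (rule LIMSEQ_I)
  fix r :: real assume "r > 0"
  then obtain J where J: "\<forall>j\<ge>J. bnorm (G j - x) \<le> r/2" using assms by (meson half_gt_zero)
  have "norm (G j - x) < r" if "J \<le> j" for j
    using J that norm_le_bnorm[of "G j - x"] \<open>r > 0\<close> by force
  then show "\<exists>J. \<forall>n\<ge>J. norm (G n - x) < r" by blast
qed

text \<open>A norm-convergent series whose terms decay geometrically in basis norm has a
  sum of basis norm at most twice the first bound: by completeness its partial sums also
  converge in the basis norm, necessarily to the same sum.\<close>
lemma bnorm_series_bound:
  assumes g: "\<And>j. bnorm (g j) \<le> c * (1/2)^j" and sums: "g sums h"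
  shows "bnorm h \<le> 2 * c"
proof -
  define G where "G J = (\<Sum>j<J. g j)" for J
  have block: "bnorm (G j - G l) \<le> 2 * c * (1/2)^l" if "l \<le> j" for l j
    using bnorm_geometric_block[OF g that] sum_diff_nat_ivl[of 0 l j g] that
    by (simp add: G_def lessThan_atLeast0)
  have "\<exists>J. \<forall>j\<ge>J. \<forall>l\<ge>J. bnorm (G j - G l) < \<epsilon>" if "\<epsilon> > 0" for \<epsilon>
  proof -
    have "(\<lambda>l. 2 * c * (1/2::real)^l) \<longlonglongrightarrow> 2 * c * 0" by (intro tendsto_intros) simp
    then have "\<forall>\<^sub>F l in sequentially. 2 * c * (1/2::real)^l < \<epsilon>"
      using \<open>\<epsilon> > 0\<close> by (intro order_tendstoD(2)) simp_all
    then obtain J where J: "\<forall>l\<ge>J. 2 * c * (1/2::real)^l < \<epsilon>"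
      unfolding eventually_sequentially by blast
    have "bnorm (G j - G l) < \<epsilon>" if "J \<le> j" "J \<le> l" for j l
    proof (cases "l \<le> j")
      case True then show ?thesis using block[OF True] J that by fastforce
    next
      case False
      then have "bnorm (G l - G j) < \<epsilon>" using block[of j l] J that by fastforce
      then show ?thesis using bnorm_minus[of "G l - G j"] by simp
    qed
    then show ?thesis by blast
  qed
  then obtain x where x: "\<forall>\<epsilon>>0. \<exists>J. \<forall>j\<ge>J. bnorm (G j - x) \<le> \<epsilon>"
    using bnorm_complete by blast
  have "G \<longlonglongrightarrow> h" using sums unfolding sums_def G_def .
  then have "x = h" using bnorm_convergence_imp_tendsto[OF x] LIMSEQ_unique by blast
  show ?thesis
  proof (rule field_le_epsilon)
    fix \<epsilon> :: real assume "\<epsilon> > 0"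
    then obtain J where J: "bnorm (G J - h) \<le> \<epsilon>" using x \<open>x = h\<close> by blast
    have "bnorm (G J) \<le> 2 * c" using block[of 0 J] by (simp add: G_def)
    moreover have "bnorm h \<le> bnorm (h - G J) + bnorm (G J)" using bnorm_triangle[of "h - G J" "G J"] by simp
    moreover have "bnorm (h - G J) = bnorm (G J - h)" using bnorm_minus[of "G J - h"] by simp
    ultimately show "bnorm h \<le> 2 * c + \<epsilon>" using J by linarith
  qed
qed

text \<open>Iterating the approximation property: every nonzero h is the sum of a series whose
  terms decay geometrically in basis norm.  At step j the remainder of norm at most
  \<open>\<parallel>h\<parallel>/2\<^sup>j\<close> is approximated to within half of that bound.\<close>
lemma successive_approximation:
  assumes K: "K > 0" and app: "\<And>h \<eta>. \<eta> > 0 \<Longrightarrow> \<exists>g. bnorm g \<le> K * norm h \<and> norm (h - g) < \<eta>"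
    and "h \<noteq> 0"
  shows "\<exists>g. (\<forall>j. bnorm (g j) \<le> K * norm h * (1/2)^j) \<and> g sums h"
proof -
  define approx where "approx h' \<eta> = (SOME g. bnorm g \<le> K * norm h' \<and> norm (h' - g) < \<eta>)" for h' \<eta>
  have approx: "bnorm (approx h' \<eta>) \<le> K * norm h' \<and> norm (h' - approx h' \<eta>) < \<eta>" if "\<eta> > 0" for h' \<eta>
    unfolding approx_def by (rule someI_ex) (rule app[OF that])
  define \<eta> where "\<eta> j = norm h * (1/2)^(Suc j)" for j
  have \<eta>_pos: "\<eta> j > 0" for j unfolding \<eta>_def using \<open>h \<noteq> 0\<close> by simp
  define rest where "rest = rec_nat h (\<lambda>j r. r - approx r (\<eta> j))"
  define g where "g j = approx (rest j) (\<eta> j)" for j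
  have rest_0: "rest 0 = h" and rest_Suc: "rest (Suc j) = rest j - g j" for j
    by (simp_all add: rest_def g_def)
  have rest_norm: "norm (rest j) \<le> norm h * (1/2)^j" for j
  proof (cases j)
    case (Suc i)
    have "norm (rest (Suc i)) < \<eta> i" using approx[OF \<eta>_pos[of i], of "rest i"] by (simp add: rest_Suc g_def)
    then show ?thesis using Suc \<eta>_def by simp
  qed (simp add: rest_0)
  have "bnorm (g j) \<le> K * norm h * (1/2)^j" for j
  proof -
    have "bnorm (g j) \<le> K * norm (rest j)" using approx[OF \<eta>_pos[of j], of "rest j"] by (simp add: g_def)
    also have "\<dots> \<le> K * (norm h * (1/2)^j)" using rest_norm[of j] K by (simp add: mult_left_mono)
    finally show ?thesis by simp
  qed
  moreover have "g sums h"
  proof -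
    have partial: "(\<Sum>j<J. g j) = h - rest J" for J
      by (induction J) (simp_all add: rest_0 rest_Suc)
    have "(\<lambda>j. norm h * (1/2::real)^j) \<longlonglongrightarrow> 0"
      using tendsto_mult_right_zero[OF LIMSEQ_power_zero[of "1/2::real"]] by simp
    moreover have "\<forall>\<^sub>F j in sequentially. norm (rest j) \<le> norm h * (1/2)^j" using rest_norm by simp
    ultimately have "rest \<longlonglongrightarrow> 0" by (rule Lim_null_comparison[rotated])
    then have "(\<lambda>J. h - rest J) \<longlonglongrightarrow> h - 0" by (intro tendsto_intros)
    then show ?thesis unfolding sums_def partial by simp
  qed
  ultimately show ?thesis by blast
qed

text \<open>The basis norm is equivalent to the original norm (in effect the open mapping
  theorem for the identity map).\<close>
lemma bnorm_bounded: "\<exists>C>0. \<forall>x. bnorm x \<le> C * norm x"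
proof -
  obtain K where K: "K > 0" and app: "\<And>h \<eta>. \<eta> > 0 \<Longrightarrow> \<exists>g. bnorm g \<le> K * norm h \<and> norm (h - g) < \<eta>"
    using bnorm_approx by blast
  have "bnorm h \<le> 2 * K * norm h" for h
  proof (cases "h = 0")
    case False
    then obtain g where "\<And>j. bnorm (g j) \<le> K * norm h * (1/2)^j" "g sums h"
      using successive_approximation[OF K app] by blast
    then have "bnorm h \<le> 2 * (K * norm h)" by (rule bnorm_series_bound)
    then show ?thesis by simp
  qed (simp add: bnorm_zero)
  then show ?thesis using K by (intro exI[of _ "2 * K"]) auto
qed

lemma coef_bounded_linear: "bounded_linear (\<lambda>x. coef x i)"
proof -
  obtain C where C: "C > 0" "\<And>x. bnorm x \<le> C * norm x" using bnorm_bounded by blast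
  have ne: "norm (e i) > 0" using basis_nonzero by simp
  show ?thesis
  proof (rule bounded_linear_intro)
    show "coef (x + y) i = coef x i + coef y i" for x y by (rule coef_add)
    show "coef (r *\<^sub>R x) i = r *\<^sub>R coef x i" for r x by (simp add: coef_scale)
    show "norm (coef x i) \<le> norm x * (2 * C / norm (e i))" for x
    proof -
      have "\<bar>coef x i\<bar> * norm (e i) \<le> 2 * (C * norm x)" using coef_le_bnorm[of x i] C(2)[of x] by linarith
      then show ?thesis using ne by (simp add: field_simps)
    qed
  qed
qed

lemma proj_approx_finite:
  assumes "finite V" and "\<delta> > 0"
  shows "\<exists>q\<ge>p. \<forall>v\<in>V. norm (v - proj q v) < \<delta>"
proof -
  have "\<forall>\<^sub>F q in sequentially. norm (v - proj q v) < \<delta>" for v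
    using tendstoD[OF proj_tendsto[of v] \<open>\<delta> > 0\<close>] by (simp add: dist_norm norm_minus_commute)
  then have "\<forall>\<^sub>F q in sequentially. \<forall>v\<in>V. norm (v - proj q v) < \<delta>"
    using \<open>finite V\<close> by (intro eventually_ball_finite) auto
  then obtain N where "\<forall>q\<ge>N. \<forall>v\<in>V. norm (v - proj q v) < \<delta>" unfolding eventually_sequentially ..
  then show ?thesis by (intro exI[of _ "max p N"]) auto
qed

definition proj_ivl :: "nat \<Rightarrow> nat \<Rightarrow> 'a \<Rightarrow> 'a" where
  "proj_ivl a b v = (\<Sum>i\<in>{a..<b}. coef v i *\<^sub>R e i)"

lemma proj_ivl_eq: "a \<le> b \<Longrightarrow> proj_ivl a b v = proj b v - proj a v"
  unfolding proj_ivl_def proj_def using sum_diff_nat_ivl[of 0 a b "\<lambda>i. coef v i *\<^sub>R e i"]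
  by (simp add: lessThan_atLeast0)

lemma supp_proj_ivl: "supp e (proj_ivl a b v) \<subseteq> {a..<b}"
  unfolding supp_def proj_ivl_def coef_finite_sum[OF finite_atLeastLessThan] by auto

end

section \<open>The construction\<close>

locale tree_construction = schauder e for e :: "nat \<Rightarrow> 'a::banach" +
  fixes k :: nat and x :: "nat set \<Rightarrow> 'a" and \<epsilon> :: "nat \<Rightarrow> real" and M :: "nat set"
    and \<phi> :: "nat set \<Rightarrow> 'a"
  assumes eps_pos: "\<forall>n. \<epsilon> n > 0" and eps_lim: "\<epsilon> \<longlonglongrightarrow> 0" and M_infinite: "infinite M"
    and subord: "subordinated M k x \<phi>"
begin

lemma phi_functional_continuous:
  "bounded_linear f \<Longrightarrow> continuous_map (subtopology cantor_topology (nsets_le M k)) euclideanreal (f \<circ> \<phi>)"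
  using subord unfolding subordinated_def continuous_map_weak_iff by blast

text \<open>Weak convergence along M of the one-point extensions of t: this is where the
  subordination (continuity at t in the Cantor topology) enters.\<close>
lemma phi_extension_tendsto:
  fixes f :: "'a \<Rightarrow> real"
  assumes t: "t \<in> nsets_le M k" "card t < k" and f: "bounded_linear f"
  shows "((\<lambda>m. f (\<phi> (insert m t))) \<longlongrightarrow> f (\<phi> t)) (inf sequentially (principal M))"
proof (rule tendstoI)
  fix \<eta> :: real assume "\<eta> > 0"
  obtain N where N: "\<forall>s\<in>nsets_le M k. s \<in> cyl N t \<longrightarrow> \<bar>f (\<phi> s) - f (\<phi> t)\<bar> < \<eta>"
    using cantor_continuous_at_cyl[OF phi_functional_continuous[OF f] t(1) \<open>\<eta> > 0\<close>] by auto
  have "insert m t \<in> nsets_le M k" if "m \<in> M" for m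
    using t that card_insert_if[of t m] unfolding nsets_le_def by auto
  moreover have "insert m t \<in> cyl N t" if "N < m" for m
    using that unfolding cyl_def by auto
  ultimately have "\<forall>m\<ge>Suc N. m \<in> M \<longrightarrow> dist (f (\<phi> (insert m t))) (f (\<phi> t)) < \<eta>"
    using N by (simp add: dist_real_def)
  then show "\<forall>\<^sub>F m in inf sequentially (principal M). dist (f (\<phi> (insert m t))) (f (\<phi> t)) < \<eta>"
    unfolding eventually_inf_principal eventually_sequentially by blast
qed

definition increment :: "nat \<Rightarrow> nat set \<Rightarrow> 'a" where
  "increment m u = \<phi> (insert m u) - \<phi> u"

text \<open>Hence, for a fixed finite family of sets and a fixed projection, the heads of the
  increments become small for all large m in M (the coordinate functionals are bounded).\<close>
lemma increment_head_small:
  assumes "finite U" and U: "\<And>u. u \<in> U \<Longrightarrow> u \<in> nsets_le M k \<and> card u < k" and "\<delta> > 0"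
  shows "\<exists>N. \<forall>m\<in>M. N \<le> m \<longrightarrow> (\<forall>u\<in>U. norm (proj p (increment m u)) < \<delta>)"
proof -
  have "\<forall>\<^sub>F m in inf sequentially (principal M). norm (proj p (increment m u)) < \<delta>"
    if "u \<in> U" for u
  proof -
    have "((\<lambda>m. \<Sum>i<p. (coef (\<phi> (insert m u)) i - coef (\<phi> u) i) *\<^sub>R e i) \<longlongrightarrow>
        (\<Sum>i<p. (coef (\<phi> u) i - coef (\<phi> u) i) *\<^sub>R e i)) (inf sequentially (principal M))"
      using U[OF that] by (intro tendsto_intros phi_extension_tendsto coef_bounded_linear) auto
    then have "((\<lambda>m. proj p (increment m u)) \<longlongrightarrow> 0) (inf sequentially (principal M))"
      by (simp add: proj_def coef_diff increment_def)
    then show ?thesis using \<open>\<delta> > 0\<close> by (auto dest: tendstoD simp: dist_norm)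
  qed
  then have "\<forall>\<^sub>F m in inf sequentially (principal M). \<forall>u\<in>U. norm (proj p (increment m u)) < \<delta>"
    using \<open>finite U\<close> by (intro eventually_ball_finite) auto
  then show ?thesis unfolding eventually_inf_principal eventually_sequentially by blast
qed

text \<open>The tolerance allowed at stage n: small enough for all of \<open>\<epsilon> 0, \<dots>, \<epsilon> n\<close>, with room
  for the k error terms of a k-set.\<close>
definition tol :: "nat \<Rightarrow> real" where "tol n = Min (\<epsilon> ` {..n}) / (real k + 1)"

lemma tol_pos: "tol n > 0"
  unfolding tol_def using eps_pos by (simp add: Min_gr_iff)

lemma tol_le: "i \<le> n \<Longrightarrow> tol n \<le> \<epsilon> i / (real k + 1)"
  unfolding tol_def by (intro divide_right_mono Min_le) auto

lemma tol_antimono: "n \<le> n' \<Longrightarrow> tol n' \<le> tol n"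
  unfolding tol_def by (intro divide_right_mono Min_antimono) auto

lemma tol_small: "\<eta> > 0 \<Longrightarrow> \<exists>n. tol n < \<eta>"
proof -
  assume "\<eta> > 0"
  then obtain n where "\<bar>\<epsilon> n - 0\<bar> < \<eta>" using eps_lim unfolding LIMSEQ_def dist_real_def by blast
  then have "\<epsilon> n < \<eta>" by simp
  moreover have "tol n \<le> \<epsilon> n / (real k + 1)" by (rule tol_le) simp
  moreover have "\<epsilon> n / (real k + 1) \<le> \<epsilon> n" using eps_pos by (simp add: divide_le_eq)
  ultimately show ?thesis by (intro exI[of _ n]) linarith
qed

text \<open>The sets u that may precede the element chosen after all elements below lo.\<close>
definition earlier :: "nat \<Rightarrow> nat set set" where
  "earlier lo = {u. u \<subseteq> M \<inter> {..<lo} \<and> card u < k}"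

text \<open>Stage n of the construction: a new element m of M (at least lo) and a block end q
  (at least the previous block end p), such that for every earlier set the increment has
  small head before p and small tail after q.\<close>
definition good :: "nat \<Rightarrow> nat \<Rightarrow> nat \<Rightarrow> nat \<times> nat \<Rightarrow> bool" where
  "good n lo p mq \<longleftrightarrow> (case mq of (m, q) \<Rightarrow> m \<in> M \<and> lo \<le> m \<and> p \<le> q \<and>
     (\<forall>u\<in>earlier lo. norm (proj p (increment m u)) < tol n / 2 \<and>
        norm (increment m u - proj q (increment m u)) < tol n / 2))"

lemma good_exists: "\<exists>mq. good n lo p mq"
proof -
  have fin: "finite (earlier lo)"
    by (rule finite_subset[of _ "Pow {..<lo}"]) (auto simp: earlier_def)
  have "u \<in> nsets_le M k \<and> card u < k" if "u \<in> earlier lo" for u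
    using that unfolding earlier_def nsets_le_def by (auto intro: finite_subset)
  then obtain N where N: "\<forall>m\<in>M. N \<le> m \<longrightarrow> (\<forall>u\<in>earlier lo. norm (proj p (increment m u)) < tol n / 2)"
    using increment_head_small[OF fin, of "tol n / 2" p] tol_pos by auto
  obtain m where m: "m \<in> M" "max N lo \<le> m"
    using M_infinite unfolding infinite_nat_iff_unbounded_le by blast
  obtain q where q: "p \<le> q" "\<forall>v\<in>increment m ` earlier lo. norm (v - proj q v) < tol n / 2"
    using proj_approx_finite[of "increment m ` earlier lo" "tol n / 2" p] fin tol_pos by auto
  show ?thesis using N m q unfolding good_def by (intro exI[of _ "(m, q)"]) auto
qed

definition choice :: "nat \<Rightarrow> nat \<Rightarrow> nat \<Rightarrow> nat \<times> nat" where
  "choice n lo p = (SOME mq. good n lo p mq)"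

primrec stage :: "nat \<Rightarrow> nat \<times> nat" where
  "stage 0 = choice 0 0 0"
| "stage (Suc n) = choice (Suc n) (Suc (fst (stage n))) (snd (stage n))"

definition mseq :: "nat \<Rightarrow> nat" where "mseq n = fst (stage n)"
definition qseq :: "nat \<Rightarrow> nat" where "qseq n = snd (stage n)"

text \<open>The lower bound for the element and the block start used at stage n.\<close>
definition lo :: "nat \<Rightarrow> nat" where "lo n = (case n of 0 \<Rightarrow> 0 | Suc i \<Rightarrow> Suc (mseq i))"
definition pseq :: "nat \<Rightarrow> nat" where "pseq n = (case n of 0 \<Rightarrow> 0 | Suc i \<Rightarrow> qseq i)"

lemma stage_good: "good n (lo n) (pseq n) (mseq n, qseq n)"
proof -
  have "stage n = choice n (lo n) (pseq n)"
    by (cases n) (simp_all add: lo_def pseq_def mseq_def qseq_def)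
  then have "good n (lo n) (pseq n) (stage n)"
    unfolding choice_def by (simp add: someI_ex[OF good_exists])
  then show ?thesis by (simp add: mseq_def qseq_def)
qed

lemma mseq_in_M: "mseq n \<in> M"
  using stage_good[of n] unfolding good_def by simp

lemma pseq_le_qseq: "pseq n \<le> qseq n"
  using stage_good[of n] unfolding good_def by simp

lemma mseq_strict_mono: "strict_mono mseq"
proof (rule strict_mono_Suc_iff[THEN iffD2, rule_format])
  fix n show "mseq n < mseq (Suc n)" using stage_good[of "Suc n"] unfolding good_def lo_def by simp
qed

lemma pseq_mono: "n \<le> n' \<Longrightarrow> pseq n \<le> pseq n'"
proof (induction n' rule: dec_induct)
  case (step n')
  then show ?case using pseq_le_qseq[of n'] by (simp add: pseq_def)
qed simp

lemma qseq_le_pseq: "n < n' \<Longrightarrow> qseq n \<le> pseq n'"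
  using pseq_mono[of "Suc n" n'] by (simp add: pseq_def)

text \<open>The infinite set L is the set of chosen elements; \<open>inv mseq\<close> is the position in L.\<close>
definition L :: "nat set" where "L = range mseq"

lemma L_subset: "L \<subseteq> M" unfolding L_def using mseq_in_M by auto

lemma L_infinite: "infinite L"
  unfolding L_def using strict_mono_imp_inj_on[OF mseq_strict_mono] range_inj_infinite by blast

lemma enumerate_L: "enumerate L n = mseq n"
  unfolding L_def by (rule enumerate_range[OF mseq_strict_mono])

lemma inv_mseq [simp]: "inv mseq (mseq n) = n"
  using strict_mono_imp_inj_on[OF mseq_strict_mono] by (simp add: inv_f_f)

lemma mseq_inv: "a \<in> L \<Longrightarrow> mseq (inv mseq a) = a"
  unfolding L_def by (simp add: f_inv_into_f)

lemma inv_mseq_le: "a \<in> L \<Longrightarrow> b \<in> L \<Longrightarrow> a \<le> b \<Longrightarrow> inv mseq a \<le> inv mseq b"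
  by (metis mseq_inv mseq_strict_mono strict_mono_less_eq)

lemma inv_mseq_less: "a \<in> L \<Longrightarrow> b \<in> L \<Longrightarrow> a < b \<Longrightarrow> inv mseq a < inv mseq b"
  by (metis mseq_inv mseq_strict_mono strict_mono_less)

lemma L_below_lo: "a \<in> L \<Longrightarrow> a < mseq n \<Longrightarrow> a < lo n"
proof -
  assume "a \<in> L" "a < mseq n"
  then obtain i where i: "a = mseq i" "i < n" unfolding L_def
    using mseq_strict_mono strict_mono_less by blast
  then obtain n' where n': "n = Suc n'" "i \<le> n'" by (cases n) auto
  then have "mseq i \<le> mseq n'" using mseq_strict_mono strict_mono_less_eq by blast
  then show "a < lo n" using i n' by (simp add: lo_def)
qed

text \<open>The tree decomposition: the increment of \<open>\<phi>\<close> at the last element of u, cut down to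
  the block belonging to that element; at the root we keep the weak limit \<open>\<phi> {}\<close>.\<close>
definition z :: "nat set \<Rightarrow> 'a" where "z u = \<phi> u - \<phi> (u - {Max u})"

definition y :: "nat set \<Rightarrow> 'a" where
  "y u = (if u = {} then \<phi> {}
          else proj_ivl (pseq (inv mseq (Max u))) (qseq (inv mseq (Max u))) (z u))"

definition xt :: "nat set \<Rightarrow> 'a" where "xt s = (\<Sum>j\<le>card s. y (restr s j))"

lemma xt_empty: "xt {} = \<phi> {}" by (simp add: xt_def y_def)

text \<open>The only error made is the cutting of each increment to its block; it is below the
  tolerance of the stage of the last element.\<close>
lemma z_minus_y_small:
  assumes u: "u \<in> nsets_le L k" "u \<noteq> {}"
  shows "norm (z u - y u) < tol (inv mseq (Max u))"
proof -
  let ?n = "inv mseq (Max u)" and ?u' = "u - {Max u}"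
  have fu: "finite u" "u \<subseteq> L" "card u \<le> k" using u unfolding nsets_le_def by auto
  have Max_u: "Max u \<in> u" using fu(1) u(2) by simp
  then have mn: "mseq ?n = Max u" using fu(2) mseq_inv by blast
  have "?u' \<in> earlier (lo ?n)"
  proof -
    have "a < lo ?n" if "a \<in> ?u'" for a
      using that fu L_below_lo[of a ?n] mn by (metis DiffE Max_ge insertI1 le_neq_implies_less subsetD)
    moreover have "card u > 0" using fu(1) u(2) by (simp add: card_gt_0_iff)
    then have "card ?u' < k" using fu Max_u by simp
    ultimately show ?thesis using fu(2) L_subset unfolding earlier_def by auto
  qed
  moreover have "z u = increment (mseq ?n) ?u'"
    unfolding z_def increment_def mn using Max_u by (simp add: insert_absorb)
  ultimately have head: "norm (proj (pseq ?n) (z u)) < tol ?n / 2"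
    and tail: "norm (z u - proj (qseq ?n) (z u)) < tol ?n / 2"
    using stage_good[of ?n] unfolding good_def by auto
  have "z u - y u = (z u - proj (qseq ?n) (z u)) + proj (pseq ?n) (z u)"
    unfolding y_def using u(2) proj_ivl_eq[OF pseq_le_qseq] by simp
  then have "norm (z u - y u) \<le> norm (z u - proj (qseq ?n) (z u)) + norm (proj (pseq ?n) (z u))"
    by (simp only: norm_triangle_ineq)
  then show ?thesis using head tail by linarith
qed

lemma supp_y: "u \<noteq> {} \<Longrightarrow> supp e (y u) \<subseteq> {pseq (inv mseq (Max u))..<qseq (inv mseq (Max u))}"
  unfolding y_def using supp_proj_ivl by simp

lemma supp_y_less:
  assumes "finite u1" "u1 \<subseteq> L" "u1 \<noteq> {}" "finite u2" "u2 \<subseteq> L" "u2 \<noteq> {}" "Max u1 < Max u2"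
  shows "set_less (supp e (y u1)) (supp e (y u2))"
proof -
  have "Max u1 \<in> L" "Max u2 \<in> L" using assms Max_in by blast+
  then have "qseq (inv mseq (Max u1)) \<le> pseq (inv mseq (Max u2))"
    using inv_mseq_less assms(7) qseq_le_pseq by blast
  then show ?thesis unfolding set_less_def using supp_y[OF assms(3)] supp_y[OF assms(6)] by fastforce
qed

text \<open>Telescoping: \<open>xt s\<close> differs from \<open>\<phi> s\<close> by the errors along the initial segments of s.\<close>
lemma phi_minus_xt:
  assumes "finite s"
  shows "\<phi> s - xt s = (\<Sum>j<card s. z (restr s (Suc j)) - y (restr s (Suc j)))"
proof -
  have z_restr: "z (restr s (Suc j)) = \<phi> (restr s (Suc j)) - \<phi> (restr s j)" if "j < card s" for j
    unfolding z_def using restr_Suc_minus_Max[OF assms that] by simp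
  have "(\<Sum>j<card s. z (restr s (Suc j))) = \<phi> (restr s (card s)) - \<phi> (restr s 0)"
    using sum_lessThan_telescope[of "\<lambda>j. \<phi> (restr s j)" "card s"] z_restr by simp
  moreover have "xt s = y {} + (\<Sum>j<card s. y (restr s (Suc j)))"
    unfolding xt_def by (simp add: sum.atMost_shift)
  ultimately show ?thesis using restr_full[OF assms] by (simp add: y_def sum_subtractf)
qed

lemma supp_restr_less:
  assumes "s1 \<in> [L]\<^bsup>k\<^esup>" "s2 \<in> [L]\<^bsup>k\<^esup>" "a < k" "b < k" "sl s1 ! a < sl s2 ! b"
  shows "set_less (supp e (y (restr s1 (Suc a)))) (supp e (y (restr s2 (Suc b))))"
proof -
  have s: "finite s1" "s1 \<subseteq> L" "a < card s1" "finite s2" "s2 \<subseteq> L" "b < card s2"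
    using assms unfolding nsets_def by auto
  show ?thesis
  proof (rule supp_y_less)
    show "restr s1 (Suc a) \<subseteq> L" using order_trans[OF restr_subset s(2)] s(1) .
    show "restr s2 (Suc b) \<subseteq> L" using order_trans[OF restr_subset s(5)] s(4) .
    show "restr s1 (Suc a) \<noteq> {}" "restr s2 (Suc b) \<noteq> {}" using restr_Suc_nonempty s by auto
    show "Max (restr s1 (Suc a)) < Max (restr s2 (Suc b))"
      using assms(5) Max_restr_Suc s by simp
  qed simp_all
qed

text \<open>Property (i): the \<open>y\<close> form a canonical tree decomposition of \<open>xt\<close>; the support
  conditions reduce to comparing last elements of initial segments.\<close>
lemma canonical_decomposition: "canonical_tree_decomposition e L k xt y"
  unfolding canonical_tree_decomposition_def
proof (intro conjI ballI allI impI)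
  fix s assume "s \<in> [L]\<^bsup>k\<^esup>"
  then show "xt s = (\<Sum>j\<le>k. y (restr s j))" unfolding xt_def nsets_def by simp
next
  fix t assume "t \<in> nsets_le L k" "t \<noteq> {}"
  then show "finite (supp e (y t))" using supp_y finite_subset by blast
next
  fix s j1 j2 assume s: "s \<in> [L]\<^bsup>k\<^esup>" and j: "1 \<le> j1 \<and> j1 < j2 \<and> j2 \<le> k"
  obtain a b where ab: "j1 = Suc a" "j2 = Suc b" using j by (cases j1; cases j2) auto
  have "sl s ! a < sl s ! b" using s j ab sl_less[of s a b] unfolding nsets_def by auto
  then show "set_less (supp e (y (restr s j1))) (supp e (y (restr s j2)))"
    unfolding ab using s j ab by (intro supp_restr_less) auto
next
  fix s1 s2 j1 j2 assume s: "s1 \<in> [L]\<^bsup>k\<^esup>" "s2 \<in> [L]\<^bsup>k\<^esup>" and pl: "plegma k s1 s2"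
    and j: "1 \<le> j1 \<and> j1 \<le> j2 \<and> j2 \<le> k"
  obtain a b where ab: "j1 = Suc a" "j2 = Suc b" using j by (cases j1; cases j2) auto
  have "sl s1 ! a < sl s2 ! a" using pl j ab unfolding plegma_def Let_def by simp
  also have "sl s2 ! a \<le> sl s2 ! b" using s(2) j ab sl_le[of s2 a b] unfolding nsets_def by auto
  finally show "set_less (supp e (y (restr s1 j1))) (supp e (y (restr s2 j2)))"
    unfolding ab using s j ab by (intro supp_restr_less) auto
next
  fix s1 s2 j1 j2 assume s: "s1 \<in> [L]\<^bsup>k\<^esup>" "s2 \<in> [L]\<^bsup>k\<^esup>" and pl: "plegma k s1 s2"
    and j: "1 \<le> j1 \<and> j1 < j2 \<and> j2 \<le> k"
  obtain a b where ab: "j1 = Suc a" "j2 = Suc b" using j by (cases j1; cases j2) auto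
  have "sl s2 ! a < sl s1 ! Suc a" using pl j ab unfolding plegma_def Let_def by simp
  also have "sl s1 ! Suc a \<le> sl s1 ! b" using s(1) j ab sl_le[of s1 "Suc a" b] unfolding nsets_def by auto
  finally show "set_less (supp e (y (restr s2 j1))) (supp e (y (restr s1 j2)))"
    unfolding ab using s j ab by (intro supp_restr_less) auto
qed

lemma error_term_small:
  assumes s: "s \<in> nsets_le L k" and j: "j < card s" and n: "mseq n \<le> sl s ! j"
  shows "norm (z (restr s (Suc j)) - y (restr s (Suc j))) < tol n"
proof -
  let ?r = "restr s (Suc j)"
  have fs: "finite s" "s \<subseteq> L" using s unfolding nsets_le_def by auto
  have Max_r: "Max ?r = sl s ! j" by (rule Max_restr_Suc[OF fs(1) j])
  then have "Max ?r \<in> L" using fs j nth_mem[of j "sl s"] by auto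
  then have "n \<le> inv mseq (Max ?r)"
    using inv_mseq_le[of "mseq n" "Max ?r"] n Max_r by (simp add: L_def)
  then have "tol (inv mseq (Max ?r)) \<le> tol n" by (rule tol_antimono)
  moreover have "norm (z ?r - y ?r) < tol (inv mseq (Max ?r))"
    using z_minus_y_small restr_in_nsets_le[OF s] restr_Suc_nonempty[OF fs(1) j] by blast
  ultimately show ?thesis by simp
qed

lemma approximation:
  assumes s: "s \<in> [L]\<^bsup>k\<^esup>" and n: "Min s = enumerate L n"
  shows "norm (x s - xt s) < \<epsilon> n"
proof -
  have fs: "finite s" "s \<subseteq> L" "card s = k" using s unfolding nsets_def by auto
  have sle: "s \<in> nsets_le L k" using fs unfolding nsets_le_def by auto
  have "s \<in> [M]\<^bsup>k\<^esup>" using s L_subset unfolding nsets_def by auto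
  then have "x s = \<phi> s" using subord unfolding subordinated_def by auto
  then have diff: "x s - xt s = (\<Sum>j<k. z (restr s (Suc j)) - y (restr s (Suc j)))"
    using phi_minus_xt[OF fs(1)] fs(3) by simp
  have "norm (z (restr s (Suc j)) - y (restr s (Suc j))) \<le> \<epsilon> n / (real k + 1)" if "j < k" for j
  proof -
    have "sl s ! j \<in> s" using that fs nth_mem[of j "sl s"] by auto
    then have "mseq n \<le> sl s ! j" using n enumerate_L fs(1) by (metis Min_le)
    then have "norm (z (restr s (Suc j)) - y (restr s (Suc j))) < tol n"
      using error_term_small sle that fs(3) by simp
    then show ?thesis using tol_le[of n n] by simp
  qed
  then have "norm (x s - xt s) \<le> (\<Sum>j<k. \<epsilon> n / (real k + 1))"
    unfolding diff by (intro sum_norm_le) simp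
  also have "\<dots> = \<epsilon> n * (real k / (real k + 1))" by simp
  also have "\<dots> < \<epsilon> n * 1" using eps_pos by (intro mult_strict_left_mono) auto
  finally show ?thesis by simp
qed

text \<open>If s extends t by elements above N (which is beyond stage n0), then the error terms
  of s and t agree except for at most k terms, each below \<open>tol n0\<close>.\<close>
lemma errors_beyond_cut:
  assumes s: "s \<in> nsets_le L k" and t: "t \<in> nsets_le L k"
    and cut: "{a\<in>s. a \<le> N} = t" and n0: "mseq n0 \<le> N"
  shows "norm ((\<phi> s - xt s) - (\<phi> t - xt t)) \<le> real k * tol n0"
proof -
  define E where "E j = z (restr s (Suc j)) - y (restr s (Suc j))" for j
  have fs: "finite s" "card s \<le> k" using s unfolding nsets_le_def by auto
  have ft: "finite t" using t unfolding nsets_le_def by auto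
  have ts: "card t \<le> card s" using cut fs(1) by (auto intro: card_mono)
  have "\<phi> t - xt t = (\<Sum>j<card t. E j)"
    unfolding phi_minus_xt[OF ft] E_def
    using restr_cut[OF fs(1), of _ N] cut by (intro sum.cong) auto
  moreover have "\<phi> s - xt s = (\<Sum>j<card s. E j)" unfolding phi_minus_xt[OF fs(1)] E_def ..
  moreover have "(\<Sum>j<card s. E j) = (\<Sum>j<card t. E j) + (\<Sum>j\<in>{card t..<card s}. E j)"
    using sum.atLeastLessThan_concat[of 0 "card t" "card s" E] ts by (simp add: lessThan_atLeast0)
  moreover have "norm (E j) \<le> tol n0" if "j \<in> {card t..<card s}" for j
  proof -
    have "N < sl s ! j" using sl_above_cut[OF fs(1), of N j] cut that by auto
    then show ?thesis using error_term_small[OF s, of j n0] n0 that unfolding E_def by simp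
  qed
  then have "norm (\<Sum>j\<in>{card t..<card s}. E j) \<le> real (card s - card t) * tol n0"
    using sum_norm_le[of "{card t..<card s}" E "\<lambda>_. tol n0"] by simp
  moreover have "real (card s - card t) * tol n0 \<le> real k * tol n0"
    using fs(2) tol_pos[of n0] by (intro mult_right_mono) auto
  ultimately show ?thesis by simp
qed

lemma xt_continuous: "continuous_map (subtopology cantor_topology (nsets_le L k)) weak_topology xt"
  unfolding continuous_map_weak_iff
proof (intro allI impI)
  fix f :: "'a \<Rightarrow> real" assume f: "bounded_linear f"
  obtain K where K: "K > 0" "\<And>v. norm (f v) \<le> norm v * K" using bounded_linear.pos_bounded[OF f] by blast
  show "continuous_map (subtopology cantor_topology (nsets_le L k)) euclideanreal (f \<circ> xt)"
  proof (rule cantor_continuous_by_cyl)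
    fix t and \<eta> :: real assume t: "t \<in> nsets_le L k" and "\<eta> > 0"
    have "t \<in> nsets_le M k" using t L_subset unfolding nsets_le_def by auto
    then obtain N1 where N1: "\<forall>s\<in>nsets_le M k. s \<in> cyl N1 t \<longrightarrow> \<bar>f (\<phi> s) - f (\<phi> t)\<bar> < \<eta>/2"
      using cantor_continuous_at_cyl[OF phi_functional_continuous[OF f], of t "\<eta>/2"] \<open>\<eta> > 0\<close> by auto
    have D: "(real k + 1) * K > 0" using K(1) by simp
    obtain n0 where "tol n0 < \<eta> / 2 / ((real k + 1) * K)"
      using tol_small[of "\<eta> / 2 / ((real k + 1) * K)"] \<open>\<eta> > 0\<close> D by auto
    then have n0: "tol n0 * ((real k + 1) * K) < \<eta> / 2" using D by (simp add: pos_less_divide_eq)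
    define N where "N = max N1 (max (Max t) (mseq n0))"
    have "\<bar>f (xt s) - f (xt t)\<bar> < \<eta>" if s: "s \<in> nsets_le L k" "s \<in> cyl N t" for s
    proof -
      have ft: "finite t" using t unfolding nsets_le_def by auto
      have "\<forall>a\<in>t. a \<le> N" using Max_ge[OF ft] unfolding N_def by fastforce
      then have cut: "{a\<in>s. a \<le> N} = t" using s(2) unfolding cyl_def by blast
      have "s \<in> nsets_le M k" using s(1) L_subset unfolding nsets_le_def by auto
      moreover have "s \<in> cyl N1 t" using s(2) cyl_mono[of N1 N t] unfolding N_def by auto
      ultimately have phi: "\<bar>f (\<phi> s) - f (\<phi> t)\<bar> < \<eta>/2" using N1 by blast
      let ?D = "(\<phi> s - xt s) - (\<phi> t - xt t)"
      have "\<bar>f ?D\<bar> \<le> norm ?D * K" using K(2) by simp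
      also have "\<dots> \<le> real k * tol n0 * K"
        using errors_beyond_cut[OF s(1) t cut] K(1) unfolding N_def by (simp add: mult_right_mono)
      also have "\<dots> \<le> tol n0 * ((real k + 1) * K)" using tol_pos[of n0] K(1) by (simp add: algebra_simps)
      also have "\<dots> < \<eta>/2" by (rule n0)
      finally have "\<bar>f ?D\<bar> < \<eta>/2" .
      moreover have "f (xt s) - f (xt t) = (f (\<phi> s) - f (\<phi> t)) - f ?D"
        using linear_diff[OF bounded_linear.linear[OF f]] by simp
      ultimately show ?thesis using phi by linarith
    qed
    then show "\<exists>N. \<forall>s\<in>nsets_le L k. s \<in> cyl N t \<longrightarrow> \<bar>(f \<circ> xt) s - (f \<circ> xt) t\<bar> < \<eta>" by auto
  qed
qed

end

theorem mainTheorem5: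
  fixes e :: "nat \<Rightarrow> 'a::banach" and k :: nat and x :: "nat set \<Rightarrow> 'a"
    and \<epsilon> :: "nat \<Rightarrow> real" and M :: "nat set" and \<phi> :: "nat set \<Rightarrow> 'a"
  assumes "schauder_basis e"
    and "\<forall>n. \<epsilon> n > 0" and "\<epsilon> \<longlonglongrightarrow> 0"
    and "infinite M"
    and "subordinated M k x \<phi>"
  shows "\<exists>L xt y. L \<subseteq> M \<and> infinite L \<and>
     canonical_tree_decomposition e L k xt y \<and> y {} = \<phi> {} \<and>
     (\<forall>s\<in>[L]\<^bsup>k\<^esup>. \<forall>n. Min s = enumerate L n \<longrightarrow> norm (x s - xt s) < \<epsilon> n) \<and>
     (\<exists>\<psi>. subordinated L k xt \<psi> \<and> \<psi> {} = \<phi> {})"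
proof -
  interpret tree_construction e k x \<epsilon> M \<phi>
    using assms by unfold_locales auto
  have "subordinated L k xt xt" unfolding subordinated_def using xt_continuous by simp
  moreover have "y {} = \<phi> {}" by (simp add: y_def)
  ultimately show ?thesis
    using L_subset L_infinite canonical_decomposition approximation xt_empty by blast
qed

end
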